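(* Let $\Omega=(-1,1)$, let $p,\nu\in\mathbb{N}_0$ with $\nu\le p$, and let $u\in H^{\nu+1}(\Omega)$. Let $q_{p,\nu}\in\Lambda_{p-\nu}^{p+\nu+1}$ be a polynomial with \[ q_{p,\nu}(1)=1,\quad q_{p,\nu}(-1)=0,\quad\text{and}\quad q_{p,\nu}^{(i)}(\pm1)=0\ \text{ for } i=1,\dots,\nu . \] Then \[ \bigl\lvert (u-\pi_p u)^{(\nu)}(\pm1)\bigr\rvert\le\|q_{p,\nu}\|_0\,\lvert u\rvert_{\nu+1}. \]
   Context: $L_j$ denotes the Legendre polynomial of degree $j$ on $(-1,1)$. For integers $i\le j$, $\Lambda_i^j:=\operatorname{span}\{L_i,L_{i+1},\dots,L_j\}$. $\|\cdot\|_0$ is the $L^2(\Omega)$ norm, and $\lvert u\rvert_k:=\|u^{(k)}\|_0$. $H^k(\Omega)$ is the usual Sobolev space. $\pi_p u$ is the $L^2(\Omega)$-orthogonal projection of $u$ onto the polynomials of degree $\le p$. *)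

theory Defs
  imports "HOL-Analysis.Analysis" "HOL-Computational_Algebra.Polynomial"
begin

fun legendre :: "nat \<Rightarrow> real poly" where
  "legendre 0 = 1"
| "legendre (Suc 0) = [:0, 1:]"
| "legendre (Suc (Suc n)) =
     smult (1 / (real n + 2))
       (smult (2 * real n + 3) ([:0, 1:] * legendre (Suc n)) - smult (real n + 1) (legendre n))"

definition Lambda :: "nat \<Rightarrow> nat \<Rightarrow> real poly set" where
  "Lambda i j = {q. \<exists>c :: nat \<Rightarrow> real. q = (\<Sum>k = i..j. smult (c k) (legendre k))}"

definition l2norm :: "(real \<Rightarrow> real) \<Rightarrow> real" where
  "l2norm f = sqrt (integral {-1..1} (\<lambda>x. (f x)^2))"

text \<open>u belongs to H^k(-1,1), with D j the (continuous representative of the)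
  j-th derivative for j < k and D k the top (weak, L2) derivative:
  D 0 = u on [-1,1], each D j (j<k) is the indefinite integral of D (j+1),
  and D k is square integrable.\<close>
definition sobolev_chain :: "nat \<Rightarrow> (real \<Rightarrow> real) \<Rightarrow> (nat \<Rightarrow> real \<Rightarrow> real) \<Rightarrow> bool" where
  "sobolev_chain k u D \<longleftrightarrow>
     (\<forall>x\<in>{-1..1}. D 0 x = u x) \<and>
     (\<forall>j<k. D (Suc j) integrable_on {-1..1} \<and>
        (\<forall>x\<in>{-1..1}. D j x = D j (-1) + integral {-1..x} (D (Suc j)))) \<and>
     D k integrable_on {-1..1} \<and>
     (\<lambda>x. (D k x)^2) integrable_on {-1..1}"

definition is_L2_proj :: "nat \<Rightarrow> (real \<Rightarrow> real) \<Rightarrow> real poly \<Rightarrow> bool" where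
  "is_L2_proj p u P \<longleftrightarrow> degree P \<le> p \<and>
     (\<forall>Q. degree Q \<le> p \<longrightarrow> integral {-1..1} (\<lambda>x. (u x - poly P x) * poly Q x) = 0)"

definition proj_L2 :: "nat \<Rightarrow> (real \<Rightarrow> real) \<Rightarrow> real poly" where
  "proj_L2 p u = (THE P. is_L2_proj p u P)"

end

theory Submission
  imports Defs
begin

(* Write e = u - \<pi>_p u, with e^(j) = D j - (\<pi>_p u)^(j).  Integrating \<integral> q e^(\<nu>+1) by parts
   \<nu>+1 times, the boundary terms involving q^(i), 1 \<le> i \<le> \<nu>, vanish, and the last
   integral \<integral> q^(\<nu>+1) e vanishes because deg q^(\<nu>+1) \<le> p and e is orthogonal to the
   polynomials of degree \<le> p.  Hence \<integral> q e^(\<nu>+1) = e^(\<nu>)(1).  Since q is orthogonal to the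
   polynomials of degree < p - \<nu>, among them (\<pi>_p u)^(\<nu>+1), this integral equals \<integral> q u^(\<nu>+1),
   and Cauchy-Schwarz gives the bound at 1.  Applying the same argument to q(-x) gives the
   bound at -1. *)

lemma integrable_on_poly: "(\<lambda>x. poly R x) integrable_on {a..b::real}"
  by (intro integrable_continuous_real continuous_intros)

lemma integral_poly_pderiv:
  fixes R :: "real poly"
  assumes "a \<le> b"
  shows "integral {a..b} (\<lambda>x. poly (pderiv R) x) = poly R b - poly R a"
proof -
  have "((\<lambda>x. poly (pderiv R) x) has_integral (poly R b - poly R a)) {a..b}"
    by (rule fundamental_theorem_of_calculus)
       (use assms in \<open>auto intro!: DERIV_subset[OF poly_DERIV]
          simp: has_real_derivative_iff_has_vector_derivative[symmetric]\<close>)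
  then show ?thesis by (rule integral_unique)
qed

lemma integral_reflect_sym_real:
  "integral {-a..a} (\<lambda>x. f (- x)) = integral {-a..a} (f :: real \<Rightarrow> real)"
  using Henstock_Kurzweil_Integration.integral_reflect_real[of a "-a" f] by simp

definition poly_integral :: "real poly \<Rightarrow> real" where
  "poly_integral R = integral {-1..1} (\<lambda>x. poly R x)"

lemma poly_integral_mult: "poly_integral (A * B) = integral {-1..1} (\<lambda>x. poly A x * poly B x)"
  by (simp add: poly_integral_def)

lemma poly_integral_add: "poly_integral (R + S) = poly_integral R + poly_integral S"
  by (simp add: poly_integral_def integral_add integrable_on_poly)

lemma poly_integral_smult: "poly_integral (smult c R) = c * poly_integral R"
  by (simp add: poly_integral_def)

lemma poly_integral_sum: "poly_integral (\<Sum>i\<in>A. F i) = (\<Sum>i\<in>A. poly_integral (F i))"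
  by (induction A rule: infinite_finite_induct) (simp_all add: poly_integral_add poly_integral_def[of 0])

lemma poly_integral_pderiv: "poly_integral (pderiv R) = poly R 1 - poly R (-1)"
  unfolding poly_integral_def by (rule integral_poly_pderiv) simp

lemma poly_integral_square_eq_0: "poly_integral (R * R) = 0 \<Longrightarrow> R = 0"
proof (rule ccontr)
  assume "poly_integral (R * R) = 0" and R: "R \<noteq> 0"
  then have "\<forall>x\<in>{-1..1}. poly R x * poly R x = 0"
    by (subst integral_eq_0_iff[symmetric]) (auto simp: poly_integral_def intro!: continuous_intros)
  then have "{-1..1::real} \<subseteq> {x. poly R x = 0}" by auto
  with poly_roots_finite[OF R] have "finite {-1..1::real}" by (rule finite_subset[rotated])
  then show False using infinite_Icc[of "-1" "1::real"] by simp
qed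

lemma higher_pderiv_eq_0: "degree (R :: real poly) < k \<Longrightarrow> (pderiv ^^ k) R = 0"
  by (rule poly_eqI) (simp add: coeff_higher_pderiv coeff_eq_0)

lemma higher_pderiv_reflect:
  "(pderiv ^^ i) (pcompose R [:0, -1:])
     = smult ((-1) ^ i) (pcompose ((pderiv ^^ i) (R :: real poly)) [:0, -1:])"
  by (induction i) (simp_all add: pderiv_smult pderiv_pcompose pderiv_pCons)

section \<open>Legendre polynomials\<close>

declare legendre.simps(3) [simp del]

lemma legendre_pderiv_identities:
  "poly (pderiv (legendre (Suc n))) x - x * poly (pderiv (legendre n)) x
     = (real n + 1) * poly (legendre n) x \<and>
   x * poly (pderiv (legendre (Suc n))) x - poly (pderiv (legendre n)) x
     = (real n + 1) * poly (legendre (Suc n)) x"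
proof (induction n arbitrary: x)
  case 0
  show ?case by (simp add: pderiv_pCons)
next
  case (Suc n)
  let ?L = "\<lambda>k. poly (legendre k) x" and ?L' = "\<lambda>k. poly (pderiv (legendre k)) x"
  have B: "?L' (Suc n) - x * ?L' n = (real n + 1) * ?L n"
    and C: "x * ?L' (Suc n) - ?L' n = (real n + 1) * ?L (Suc n)"
    using Suc.IH[of x] by blast+
  have rec: "(real n + 2) * ?L (Suc (Suc n)) = (2 * real n + 3) * x * ?L (Suc n) - (real n + 1) * ?L n"
    by (simp add: legendre.simps(3) field_simps)
  have "(real n + 2) * ?L' (Suc (Suc n))
      = (2 * real n + 3) * (?L (Suc n) + x * ?L' (Suc n)) - (real n + 1) * ?L' n"
    by (simp add: legendre.simps(3) pderiv_smult pderiv_diff pderiv_mult pderiv_pCons field_simps)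
  also have "\<dots> = (real n + 2) * (x * ?L' (Suc n) + (real n + 2) * ?L (Suc n))
      + (real n + 1) * (x * ?L' (Suc n) - ?L' n) - (real n + 1) * (real n + 1) * ?L (Suc n)"
    by (simp add: algebra_simps)
  also have "\<dots> = (real n + 2) * (x * ?L' (Suc n) + (real n + 2) * ?L (Suc n))"
    unfolding C by simp
  finally have B': "?L' (Suc (Suc n)) - x * ?L' (Suc n) = (real (Suc n) + 1) * ?L (Suc n)"
    by (simp add: add.commute)
  have "x * ?L' (Suc (Suc n)) - ?L' (Suc n)
      = x * (x * ?L' (Suc n) - ?L' n) - (?L' (Suc n) - x * ?L' n) + (real n + 2) * x * ?L (Suc n)"
    using B' by (simp add: algebra_simps)
  also have "\<dots> = (2 * real n + 3) * x * ?L (Suc n) - (real n + 1) * ?L n"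
    unfolding B C by (simp add: algebra_simps)
  also have "\<dots> = (real (Suc n) + 1) * ?L (Suc (Suc n))"
    using rec by (simp add: add.commute)
  finally show ?case using B' by blast
qed

lemma legendre_pderiv_X2:
  "[:-1, 0, 1:] * pderiv (legendre (Suc n)) = smult (real n + 1) ([:0, 1:] * legendre (Suc n) - legendre n)"
proof (rule poly_ext)
  fix x :: real
  let ?L = "\<lambda>k. poly (legendre k) x" and ?L' = "\<lambda>k. poly (pderiv (legendre k)) x"
  have B: "?L' (Suc n) - x * ?L' n = (real n + 1) * ?L n"
    and C: "x * ?L' (Suc n) - ?L' n = (real n + 1) * ?L (Suc n)"
    using legendre_pderiv_identities[of n x] by blast+
  have "poly ([:-1, 0, 1:] * pderiv (legendre (Suc n))) x
      = x * (x * ?L' (Suc n) - ?L' n) - (?L' (Suc n) - x * ?L' n)"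
    by (simp add: algebra_simps)
  also have "\<dots> = poly (smult (real n + 1) ([:0, 1:] * legendre (Suc n) - legendre n)) x"
    unfolding B C by (simp add: algebra_simps)
  finally show "poly ([:-1, 0, 1:] * pderiv (legendre (Suc n))) x
      = poly (smult (real n + 1) ([:0, 1:] * legendre (Suc n) - legendre n)) x" .
qed

lemma legendre_ode:
  "pderiv ([:-1, 0, 1:] * pderiv (legendre n)) = smult (real n * (real n + 1)) (legendre n)"
proof (cases n)
  case (Suc m)
  have "pderiv ([:-1, 0, 1:] * pderiv (legendre n))
      = smult (real m + 1) (legendre (Suc m) + ([:0, 1:] * pderiv (legendre (Suc m)) - pderiv (legendre m)))"
    unfolding Suc legendre_pderiv_X2
    by (simp add: pderiv_mult pderiv_diff pderiv_smult pderiv_pCons algebra_simps)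
  also have "\<dots> = smult (real n * (real n + 1)) (legendre n)"
  proof (rule poly_ext)
    fix x
    let ?L = "\<lambda>k. poly (legendre k) x" and ?L' = "\<lambda>k. poly (pderiv (legendre k)) x"
    have C: "x * ?L' (Suc m) - ?L' m = (real m + 1) * ?L (Suc m)"
      using legendre_pderiv_identities[of m x] by blast
    have "poly (smult (real m + 1) (legendre (Suc m)
          + ([:0, 1:] * pderiv (legendre (Suc m)) - pderiv (legendre m)))) x
        = (real m + 1) * (?L (Suc m) + (x * ?L' (Suc m) - ?L' m))"
      by simp
    also have "\<dots> = poly (smult (real n * (real n + 1)) (legendre n)) x"
      unfolding C Suc by (simp add: algebra_simps)
    finally show "poly (smult (real m + 1) (legendre (Suc m)
          + ([:0, 1:] * pderiv (legendre (Suc m)) - pderiv (legendre m)))) x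
        = poly (smult (real n * (real n + 1)) (legendre n)) x" .
  qed
  finally show ?thesis .
qed simp

lemma legendre_orthogonal:
  assumes "n \<noteq> m"
  shows "poly_integral (legendre n * legendre m) = 0"
proof -
  (* L_k is an eigenfunction of y \<mapsto> ((x^2 - 1) y')', which is symmetric because x^2 - 1
     vanishes at \<plusminus>1; eigenfunctions for distinct eigenvalues k(k+1) are orthogonal. *)
  have by_parts: "real k * (real k + 1) * poly_integral (legendre k * legendre j)
      = - poly_integral ([:-1, 0, 1:] * pderiv (legendre k) * pderiv (legendre j))" for k j
  proof -
    let ?W = "[:-1, 0, 1:] :: real poly"
    have "pderiv (?W * pderiv (legendre k) * legendre j)
        = pderiv (?W * pderiv (legendre k)) * legendre j + ?W * pderiv (legendre k) * pderiv (legendre j)"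
      by (subst pderiv_mult) (simp only: ac_simps)
    also have "\<dots> = smult (real k * (real k + 1)) (legendre k * legendre j)
        + ?W * pderiv (legendre k) * pderiv (legendre j)"
      unfolding legendre_ode by simp
    finally have "pderiv (?W * pderiv (legendre k) * legendre j) = \<dots>" .
    moreover have "poly_integral (pderiv (?W * pderiv (legendre k) * legendre j)) = 0"
      unfolding poly_integral_pderiv by simp
    ultimately show ?thesis by (simp add: poly_integral_add poly_integral_smult)
  qed
  have "real n * (real n + 1) * poly_integral (legendre n * legendre m)
      = - poly_integral ([:-1, 0, 1:] * pderiv (legendre n) * pderiv (legendre m))"
    by (rule by_parts)
  also have "\<dots> = - poly_integral ([:-1, 0, 1:] * pderiv (legendre m) * pderiv (legendre n))"
    by (simp only: mult_ac)
  also have "\<dots> = real m * (real m + 1) * poly_integral (legendre n * legendre m)"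
    by (simp only: by_parts[symmetric] mult.commute[of "legendre m"])
  finally have eigen: "real n * (real n + 1) * poly_integral (legendre n * legendre m)
      = real m * (real m + 1) * poly_integral (legendre n * legendre m)" .
  have "(real n - real m) * (real n + real m + 1) \<noteq> 0"
    using assms by simp
  then have "real n * (real n + 1) \<noteq> real m * (real m + 1)"
    by (simp add: algebra_simps)
  with eigen show ?thesis by simp
qed

lemma degree_legendre_le: "degree (legendre n) \<le> n"
proof (induction n rule: legendre.induct)
  case (3 n)
  have "degree ([:0, 1:] * legendre (Suc n)) \<le> Suc (Suc n)"
    using degree_mult_le[of "[:0, 1:]" "legendre (Suc n)"] 3 by simp
  with 3 show ?case
    unfolding legendre.simps(3) by (auto intro!: degree_diff_le)
qed simp_all

lemma coeff_legendre_pos: "coeff (legendre n) n > 0"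
proof (induction n rule: legendre.induct)
  case (3 n)
  have "coeff (legendre (Suc (Suc n))) (Suc (Suc n))
      = (2 * real n + 3) / (real n + 2) * coeff (legendre (Suc n)) (Suc n)"
    using degree_legendre_le[of n] by (simp add: legendre.simps(3) coeff_eq_0)
  with 3 show ?case by simp
qed simp_all

lemma degree_legendre [simp]: "degree (legendre n) = n"
proof (rule antisym[OF degree_legendre_le le_degree])
  show "coeff (legendre n) n \<noteq> 0" using coeff_legendre_pos[of n] by simp
qed

lemma poly_in_legendre_span:
  "degree (Q :: real poly) \<le> d \<Longrightarrow> \<exists>c. Q = (\<Sum>j\<le>d. smult (c j) (legendre j))"
proof (induction d arbitrary: Q)
  case 0
  then have "Q = [:coeff Q 0:]" by (metis degree_0_id le_zero_eq)
  then show ?case by (intro exI[of _ "\<lambda>_. coeff Q 0"]) simp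
next
  case (Suc d)
  define a where "a = coeff Q (Suc d) / coeff (legendre (Suc d)) (Suc d)"
  have top: "coeff (legendre (Suc d)) (Suc d) \<noteq> 0"
    using coeff_legendre_pos[of "Suc d"] by simp
  have "degree (Q - smult a (legendre (Suc d))) \<le> d"
  proof (rule degree_le, intro allI impI)
    fix i assume "d < i"
    then consider "i = Suc d" | "Suc d < i" by linarith
    then show "coeff (Q - smult a (legendre (Suc d))) i = 0"
      by cases (use Suc.prems top in \<open>auto simp: a_def coeff_eq_0\<close>)
  qed
  then obtain c where c: "Q - smult a (legendre (Suc d)) = (\<Sum>j\<le>d. smult (c j) (legendre j))"
    using Suc.IH by blast
  have "(\<Sum>j\<le>d. smult ((c(Suc d := a)) j) (legendre j)) = (\<Sum>j\<le>d. smult (c j) (legendre j))"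
    by (intro sum.cong) auto
  then have "Q = (\<Sum>j\<le>Suc d. smult ((c(Suc d := a)) j) (legendre j))"
    using c by (simp add: algebra_simps)
  then show ?case by blast
qed

lemma legendre_orthogonal_low_degree:
  assumes "degree (Q :: real poly) < k"
  shows "poly_integral (legendre k * Q) = 0"
proof -
  have "degree Q \<le> k - 1" using assms by linarith
  then obtain c where c: "Q = (\<Sum>j\<le>k - 1. smult (c j) (legendre j))"
    using poly_in_legendre_span by blast
  have "poly_integral (legendre k * Q) = (\<Sum>j\<le>k - 1. c j * poly_integral (legendre k * legendre j))"
    unfolding c by (simp add: sum_distrib_left poly_integral_sum poly_integral_smult)
  also have "\<dots> = 0"
    using assms by (intro sum.neutral) (auto intro!: legendre_orthogonal)
  finally show ?thesis .
qed

lemma poly_integral_legendre_square_nonzero: "poly_integral (legendre k * legendre k) \<noteq> 0"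
  using poly_integral_square_eq_0[of "legendre k"] degree_legendre[of k]
  by (metis coeff_0 coeff_legendre_pos less_irrefl)

lemma Lambda_degree_le: "q \<in> Lambda i j \<Longrightarrow> degree q \<le> j"
  unfolding Lambda_def
  by (auto intro!: degree_sum_le degree_smult_le[THEN order.trans])

lemma Lambda_orthogonal_low_degree:
  assumes "q \<in> Lambda i j" and "degree Q < i"
  shows "poly_integral (q * Q) = 0"
proof -
  obtain c where c: "q = (\<Sum>k = i..j. smult (c k) (legendre k))"
    using assms(1) unfolding Lambda_def by blast
  have "poly_integral (q * Q) = (\<Sum>k = i..j. c k * poly_integral (legendre k * Q))"
    unfolding c by (simp add: sum_distrib_right poly_integral_sum poly_integral_smult)
  also have "\<dots> = 0"
    using assms(2) by (intro sum.neutral) (auto intro!: legendre_orthogonal_low_degree)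
  finally show ?thesis .
qed

section \<open>The $L^2$ projection\<close>

lemma integrable_on_diff_poly_mult_poly:
  fixes u :: "real \<Rightarrow> real"
  assumes "\<And>Q. (\<lambda>x. u x * poly Q x) integrable_on {-1..1}"
  shows "(\<lambda>x. (u x - poly R x) * poly Q x) integrable_on {-1..1}"
proof -
  have "(\<lambda>x. u x * poly Q x - poly (R * Q) x) integrable_on {-1..1}"
    by (rule integrable_diff[OF assms integrable_on_poly])
  then show ?thesis by (simp add: algebra_simps)
qed

lemma is_L2_proj_unique:
  assumes u: "\<And>Q. (\<lambda>x. u x * poly Q x) integrable_on {-1..1}"
    and P: "is_L2_proj p u P" and P': "is_L2_proj p u P'"
  shows "P' = P"
proof -
  have "degree (P' - P) \<le> p"
    using P P' unfolding is_L2_proj_def by (intro degree_diff_le) auto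
  then have orth: "integral {-1..1} (\<lambda>x. (u x - poly P x) * poly (P' - P) x) = 0"
    "integral {-1..1} (\<lambda>x. (u x - poly P' x) * poly (P' - P) x) = 0"
    using P P' unfolding is_L2_proj_def by auto
  have "(\<lambda>x. poly (P' - P) x * poly (P' - P) x)
      = (\<lambda>x. (u x - poly P x) * poly (P' - P) x - (u x - poly P' x) * poly (P' - P) x)"
    by (auto simp: algebra_simps)
  then have "poly_integral ((P' - P) * (P' - P)) = 0"
    unfolding poly_integral_mult
    by (simp only: integral_diff[OF integrable_on_diff_poly_mult_poly[OF u]
          integrable_on_diff_poly_mult_poly[OF u]] orth)
  then have "P' - P = 0" by (rule poly_integral_square_eq_0)
  then show ?thesis by simp
qed

lemma is_L2_proj_exists:
  assumes u: "\<And>Q. (\<lambda>x. u x * poly Q x) integrable_on {-1..1}"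
  shows "\<exists>P. is_L2_proj p u P"
proof -
  define \<alpha> where "\<alpha> k = integral {-1..1} (\<lambda>x. u x * poly (legendre k) x)
    / poly_integral (legendre k * legendre k)" for k
  define P where "P = (\<Sum>k\<le>p. smult (\<alpha> k) (legendre k))"
  have orth_legendre: "integral {-1..1} (\<lambda>x. (u x - poly P x) * poly (legendre j) x) = 0"
    if "j \<le> p" for j
  proof -
    have "poly_integral (P * legendre j) = (\<Sum>k\<le>p. \<alpha> k * poly_integral (legendre k * legendre j))"
      unfolding P_def by (simp add: sum_distrib_right poly_integral_sum poly_integral_smult)
    also have "\<dots> = \<alpha> j * poly_integral (legendre j * legendre j)"
      using that by (subst sum.remove[of _ j]) (auto intro!: sum.neutral legendre_orthogonal)
    also have "\<dots> = integral {-1..1} (\<lambda>x. u x * poly (legendre j) x)"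
      unfolding \<alpha>_def using poly_integral_legendre_square_nonzero[of j] by simp
    finally show ?thesis
      using integrable_on_poly[of "P * legendre j"]
      by (simp add: left_diff_distrib integral_diff u poly_integral_mult)
  qed
  have "integral {-1..1} (\<lambda>x. (u x - poly P x) * poly Q x) = 0" if Q: "degree Q \<le> p" for Q
  proof -
    obtain c where c: "Q = (\<Sum>j\<le>p. smult (c j) (legendre j))"
      using poly_in_legendre_span[OF Q] by blast
    have "integral {-1..1} (\<lambda>x. (u x - poly P x) * poly Q x)
        = integral {-1..1} (\<lambda>x. \<Sum>j\<le>p. c j * ((u x - poly P x) * poly (legendre j) x))"
      unfolding c by (simp add: poly_sum sum_distrib_left algebra_simps)
    also have "\<dots> = (\<Sum>j\<le>p. c j * integral {-1..1} (\<lambda>x. (u x - poly P x) * poly (legendre j) x))"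
      by (subst integral_sum) (auto intro!: integrable_on_mult_right integrable_on_diff_poly_mult_poly[OF u])
    finally show ?thesis by (simp add: orth_legendre)
  qed
  moreover have "degree P \<le> p"
    unfolding P_def by (auto intro!: degree_sum_le degree_smult_le[THEN order.trans])
  ultimately show ?thesis unfolding is_L2_proj_def by blast
qed

lemma is_L2_proj_proj_L2:
  assumes "\<And>Q. (\<lambda>x. u x * poly Q x) integrable_on {-1..1}"
  shows "is_L2_proj p u (proj_L2 p u)"
  unfolding proj_L2_def
  using is_L2_proj_exists[OF assms] is_L2_proj_unique[OF assms] by (metis theI)

section \<open>Integration by parts against a polynomial\<close>

lemma integrable_on_continuous_mult:
  fixes c g :: "real \<Rightarrow> real"
  assumes c: "continuous_on {a..b} c" and g: "g absolutely_integrable_on {a..b}"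
  shows "(\<lambda>x. c x * g x) integrable_on {a..b}"
proof (rule set_lebesgue_integral_eq_integral(1),
    rule absolutely_integrable_bounded_measurable_product_real[OF _ _ _ g])
  show "c \<in> borel_measurable (lebesgue_on {a..b})"
    using c by (rule continuous_imp_measurable_on_sets_lebesgue) simp
  show "bounded (c ` {a..b})"
    by (intro compact_imp_bounded compact_continuous_image c compact_Icc)
qed simp

lemma absolutely_integrable_on_borel_representative:
  fixes f :: "real \<Rightarrow> real"
  assumes "f absolutely_integrable_on S"
  obtains h where "h \<in> borel_measurable lborel" "integrable lborel h"
    "AE x in lborel. x \<in> S \<longrightarrow> h x = f x"
proof -
  define g where "g = (\<lambda>x. indicator S x *\<^sub>R f x)"
  have gi: "integrable lebesgue g"
    using assms unfolding g_def set_integrable_def .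
  then have gm: "g \<in> borel_measurable lebesgue" by auto
  then obtain h where hm: "h \<in> borel_measurable lborel" and gh: "AE x in lborel. g x = h x"
    using completion_ex_borel_measurable_real by blast
  have "integrable lebesgue h"
    using gi gh integrable_cong_AE[of g lebesgue h] AE_completion[OF gh]
      measurable_completion[OF hm] gm by auto
  then have "integrable lborel h"
    using integrable_completion[of h lborel] hm by simp
  moreover have "AE x in lborel. x \<in> S \<longrightarrow> h x = f x"
    using gh by eventually_elim (auto simp: g_def)
  ultimately show ?thesis using that hm by blast
qed

lemma integrable_triangle_poly_mult:
  fixes h :: "real \<Rightarrow> real" and R :: "real poly"
  assumes [measurable]: "h \<in> borel_measurable lborel" and h: "integrable lborel h" and ab: "a \<le> b"
  shows "integrable (lborel \<Otimes>\<^sub>M lborel)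
    (\<lambda>(x, t). if a \<le> t \<and> t \<le> x \<and> x \<le> b then poly R x * h t else 0)"
proof -
  have [measurable]: "poly R \<in> borel_measurable borel"
    by (intro borel_measurable_continuous_onI continuous_intros)
  have "compact (poly R ` {a..b})"
    by (intro compact_continuous_image continuous_intros compact_Icc)
  then obtain M where M: "\<And>x. x \<in> {a..b} \<Longrightarrow> \<bar>poly R x\<bar> \<le> M"
    using compact_imp_bounded bounded_iff by (metis image_eqI real_norm_def)
  then have "0 \<le> M" using ab by (meson abs_ge_zero atLeastAtMost_iff order.trans order_refl)
  define d where "d = (\<lambda>(x::real, t::real). M * (indicator {a..b} x * \<bar>h t\<bar>))"
  have [measurable]: "d \<in> borel_measurable (lborel \<Otimes>\<^sub>M lborel)"
    unfolding d_def by measurable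
  have "integrable (lborel \<Otimes>\<^sub>M lborel) d"
  proof (rule lborel_pair.Fubini_integrable)
    have "(\<lambda>x. \<integral>t. norm (d (x, t)) \<partial>lborel) = (\<lambda>x. indicator {a..b} x * (M * \<integral>t. \<bar>h t\<bar> \<partial>lborel))"
      using \<open>0 \<le> M\<close> by (auto simp: d_def abs_mult indicator_def)
    then show "integrable lborel (\<lambda>x. \<integral>t. norm (d (x, t)) \<partial>lborel)"
      using integrable_real_indicator[of "{a..b}"] ab by simp
    show "AE x in lborel. integrable lborel (\<lambda>t. d (x, t))"
      using h by (simp add: d_def)
  qed simp
  moreover have "(\<lambda>(x, t). if a \<le> t \<and> t \<le> x \<and> x \<le> b then poly R x * h t else 0)
      \<in> borel_measurable (lborel \<Otimes>\<^sub>M lborel)"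
    by measurable
  ultimately show ?thesis
  proof (rule Bochner_Integration.integrable_bound, intro AE_I2)
    fix z :: "real \<times> real"
    show "norm ((\<lambda>(x, t). if a \<le> t \<and> t \<le> x \<and> x \<le> b then poly R x * h t else 0) z) \<le> norm (d z)"
      using M \<open>0 \<le> M\<close> by (cases z) (auto simp: d_def abs_mult intro!: mult_right_mono)
  qed
qed

lemma integral_cong_AE_lborel:
  assumes "AE x in lborel. x \<in> S \<longrightarrow> f x = g x"
  shows "integral S f = integral S g"
  unfolding integral_def integrable_on_def using has_integral_AE[OF assms] by simp

lemma integral_poly_pderiv_mult_indefinite_integral:
  fixes f :: "real \<Rightarrow> real" and r :: "real poly"
  assumes f: "f absolutely_integrable_on {a..b}" and ab: "a \<le> b"
  shows "integral {a..b} (\<lambda>x. poly (pderiv r) x * integral {a..x} f)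
       = integral {a..b} (\<lambda>t. f t * (poly r b - poly r t))"
proof -
  obtain h where hm[measurable]: "h \<in> borel_measurable lborel" and hi: "integrable lborel h"
    and hf: "AE x in lborel. x \<in> {a..b} \<longrightarrow> h x = f x"
    using absolutely_integrable_on_borel_representative[OF f] by blast
  have fi: "f integrable_on {a..b}"
    using f by (rule set_lebesgue_integral_eq_integral(1))
  have integral_h: "integral {a..x} h = integral {a..x} f" if "x \<le> b" for x
    by (rule integral_cong_AE_lborel) (use hf that in \<open>auto elim: AE_mp\<close>)
  (* Both sides integrate r'(x) f(t) over the triangle a \<le> t \<le> x \<le> b, in the two orders. *)
  define k where "k = (\<lambda>x t. if a \<le> t \<and> t \<le> x \<and> x \<le> b then poly (pderiv r) x * h t else 0)"
  have k: "integrable (lborel \<Otimes>\<^sub>M lborel) (case_prod k)"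
    unfolding k_def by (rule integrable_triangle_poly_mult[OF hm hi ab])
  have inner_t: "(\<integral>t. k x t \<partial>lborel) = indicator {a..b} x * (poly (pderiv r) x * integral {a..x} f)" for x
  proof (cases "x \<in> {a..b}")
    case True
    have "(\<lambda>t. k x t) = (\<lambda>t. poly (pderiv r) x * (indicator {a..x} t *\<^sub>R h t))"
      using True by (auto simp: k_def indicator_def fun_eq_iff)
    moreover have "set_integrable lborel {a..x} h"
      unfolding set_integrable_def by (rule integrable_mult_indicator) (use hi in auto)
    ultimately show ?thesis
      using True set_borel_integral_eq_integral(2)[of "{a..x}" h] integral_h[of x]
      by (simp add: set_lebesgue_integral_def)
  next
    case False
    then have "(\<lambda>t. k x t) = (\<lambda>t. 0)" by (auto simp: k_def fun_eq_iff)
    then show ?thesis using False by simp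
  qed
  have inner_x: "(\<integral>x. k x t \<partial>lborel) = indicator {a..b} t * (h t * (poly r b - poly r t))" for t
  proof (cases "t \<in> {a..b}")
    case True
    have "(\<lambda>x. k x t) = (\<lambda>x. h t * (poly (pderiv r) x * indicator {t..b} x))"
      using True by (auto simp: k_def indicator_def fun_eq_iff)
    moreover have "(\<integral>x. poly (pderiv r) x * indicator {t..b} x \<partial>lborel) = poly r b - poly r t"
      by (rule integral_FTC_Icc_real) (use True in \<open>auto intro: poly_DERIV\<close>)
    ultimately show ?thesis using True by simp
  next
    case False
    then have "(\<lambda>x. k x t) = (\<lambda>x. 0)" by (auto simp: k_def fun_eq_iff)
    then show ?thesis using False by simp
  qed
  have "integral {a..b} (\<lambda>x. poly (pderiv r) x * integral {a..x} f) = (\<integral>x. (\<integral>t. k x t \<partial>lborel) \<partial>lborel)"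
  proof -
    have "continuous_on {a..b} (\<lambda>x. poly (pderiv r) x * integral {a..x} f)"
      by (intro continuous_intros indefinite_integral_continuous_1 fi)
    from set_borel_integral_eq_integral(2)[OF borel_integrable_atLeastAtMost'[OF this]]
    show ?thesis by (simp add: inner_t set_lebesgue_integral_def)
  qed
  also have "\<dots> = (\<integral>t. (\<integral>x. k x t \<partial>lborel) \<partial>lborel)"
    by (rule lborel_pair.Fubini_integral[OF k, symmetric])
  also have "\<dots> = integral {a..b} (\<lambda>t. h t * (poly r b - poly r t))"
  proof -
    have "set_integrable lborel {a..b} (\<lambda>t. h t * (poly r b - poly r t))"
      using lborel_pair.integrable_snd[OF k] by (simp add: inner_x set_integrable_def)
    from set_borel_integral_eq_integral(2)[OF this]
    show ?thesis by (simp add: inner_x set_lebesgue_integral_def)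
  qed
  also have "\<dots> = integral {a..b} (\<lambda>t. f t * (poly r b - poly r t))"
    by (rule integral_cong_AE_lborel) (use hf in \<open>auto elim: AE_mp\<close>)
  finally show ?thesis .
qed

lemma integral_poly_mult_by_parts:
  fixes g G :: "real \<Rightarrow> real" and r :: "real poly"
  assumes g: "g absolutely_integrable_on {a..b}" and ab: "a \<le> b"
    and G: "\<And>x. x \<in> {a..b} \<Longrightarrow> G x = G a + integral {a..x} g"
  shows "integral {a..b} (\<lambda>x. poly r x * g x)
       = poly r b * G b - poly r a * G a - integral {a..b} (\<lambda>x. poly (pderiv r) x * G x)"
proof -
  have gi: "g integrable_on {a..b}"
    using g by (rule set_lebesgue_integral_eq_integral(1))
  have rg: "(\<lambda>x. poly r x * g x) integrable_on {a..b}"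
    by (intro integrable_on_continuous_mult g continuous_intros)
  have "integral {a..b} (\<lambda>x. poly (pderiv r) x * G x)
      = integral {a..b} (\<lambda>x. G a * poly (pderiv r) x + poly (pderiv r) x * integral {a..x} g)"
  proof (rule integral_cong)
    fix x assume "x \<in> {a..b}"
    from G[OF this] show "poly (pderiv r) x * G x
        = G a * poly (pderiv r) x + poly (pderiv r) x * integral {a..x} g"
      by (simp add: algebra_simps)
  qed
  also have "\<dots> = G a * integral {a..b} (\<lambda>x. poly (pderiv r) x)
      + integral {a..b} (\<lambda>x. poly (pderiv r) x * integral {a..x} g)"
    by (subst integral_add)
       (auto intro!: integrable_continuous_real continuous_intros indefinite_integral_continuous_1 gi)
  also have "\<dots> = G a * (poly r b - poly r a) + integral {a..b} (\<lambda>t. g t * (poly r b - poly r t))"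
    by (simp add: integral_poly_pderiv[OF ab] integral_poly_pderiv_mult_indefinite_integral[OF g ab])
  also have "integral {a..b} (\<lambda>t. g t * (poly r b - poly r t))
      = poly r b * integral {a..b} g - integral {a..b} (\<lambda>x. poly r x * g x)"
    by (simp add: right_diff_distrib mult.commute[of "g _"] integral_diff rg gi integrable_on_mult_right)
  finally show ?thesis using G[of b] ab by (simp add: algebra_simps)
qed

lemma square_integrable_imp_absolutely_integrable:
  fixes g :: "real \<Rightarrow> real"
  assumes "g integrable_on {a..b}" "(\<lambda>x. (g x)\<^sup>2) integrable_on {a..b}"
  shows "g absolutely_integrable_on {a..b}"
proof (rule measurable_bounded_by_integrable_imp_absolutely_integrable)
  show "g \<in> borel_measurable (lebesgue_on {a..b})" using assms(1) by (rule integrable_imp_measurable)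
  show "(\<lambda>x. 1 + (g x)\<^sup>2) integrable_on {a..b}"
    by (rule integrable_add[OF integrable_const_ivl assms(2)])
  show "norm (g x) \<le> 1 + (g x)\<^sup>2" for x
  proof -
    have "0 \<le> (\<bar>g x\<bar> - 1)\<^sup>2" by simp
    then show ?thesis by (simp add: power2_diff)
  qed
qed simp

lemma abs_le_sqrt_mult_sqrt_if_quadratic_nonneg:
  fixes A B C :: real
  assumes quadratic: "\<And>t. 0 \<le> t\<^sup>2 * A - 2 * t * B + C" and "0 \<le> A"
  shows "\<bar>B\<bar> \<le> sqrt A * sqrt C"
proof -
  have "B\<^sup>2 \<le> A * C"
  proof (cases "A = 0")
    case True
    have "B = 0"
    proof (rule ccontr)
      assume "B \<noteq> 0"
      then have "2 * ((C + 1) / (2 * B)) * B = C + 1" by simp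
      with quadratic[of "(C + 1) / (2 * B)"] True show False by simp
    qed
    with True show ?thesis by simp
  next
    case False
    with \<open>0 \<le> A\<close> have A: "A > 0" by simp
    have "(B / A)\<^sup>2 * A - 2 * (B / A) * B = - (B\<^sup>2 / A)"
      using A by (simp add: power2_eq_square field_simps)
    with quadratic[of "B / A"] have "B\<^sup>2 / A \<le> C" by linarith
    with A show ?thesis by (simp add: divide_le_eq mult.commute)
  qed
  then have "sqrt (B\<^sup>2) \<le> sqrt (A * C)" by (rule real_sqrt_le_mono)
  then show ?thesis by (simp add: real_sqrt_mult)
qed

lemma abs_integral_mult_le_l2norm:
  fixes f g :: "real \<Rightarrow> real"
  assumes f: "continuous_on {-1..1} f"
    and g: "g integrable_on {-1..1}" and g2: "(\<lambda>x. (g x)\<^sup>2) integrable_on {-1..1}"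
  shows "\<bar>integral {-1..1} (\<lambda>x. f x * g x)\<bar> \<le> l2norm f * l2norm g"
  unfolding l2norm_def
proof (rule abs_le_sqrt_mult_sqrt_if_quadratic_nonneg)
  have fg: "(\<lambda>x. f x * g x) integrable_on {-1..1}"
    by (rule integrable_on_continuous_mult[OF f square_integrable_imp_absolutely_integrable[OF g g2]])
  have f2: "(\<lambda>x. (f x)\<^sup>2) integrable_on {-1..1}"
    by (intro integrable_continuous_real continuous_on_power f)
  show "0 \<le> integral {-1..1} (\<lambda>x. (f x)\<^sup>2)"
    by (rule integral_nonneg[OF f2]) simp
  fix t :: real
  have expand: "(\<lambda>x. (t * f x - g x)\<^sup>2) = (\<lambda>x. t\<^sup>2 * (f x)\<^sup>2 - 2 * t * (f x * g x) + (g x)\<^sup>2)"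
    by (simp add: power2_eq_square algebra_simps)
  have "(\<lambda>x. (t * f x - g x)\<^sup>2) integrable_on {-1..1}"
    unfolding expand by (intro integrable_add integrable_diff integrable_on_mult_right f2 fg g2)
  then have "0 \<le> integral {-1..1} (\<lambda>x. (t * f x - g x)\<^sup>2)"
    by (rule integral_nonneg) simp
  also have "\<dots> = t\<^sup>2 * integral {-1..1} (\<lambda>x. (f x)\<^sup>2) - 2 * t * integral {-1..1} (\<lambda>x. f x * g x)
      + integral {-1..1} (\<lambda>x. (g x)\<^sup>2)"
    unfolding expand
    by (simp add: integral_add integral_diff integrable_add integrable_diff integrable_on_mult_right f2 fg g2)
  finally show "0 \<le> t\<^sup>2 * integral {-1..1} (\<lambda>x. (f x)\<^sup>2) - 2 * t * integral {-1..1} (\<lambda>x. f x * g x)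
      + integral {-1..1} (\<lambda>x. (g x)\<^sup>2)" .
qed

section \<open>Sobolev chains\<close>

lemma sobolev_chain_base: "sobolev_chain k u D \<Longrightarrow> x \<in> {-1..1} \<Longrightarrow> D 0 x = u x"
  unfolding sobolev_chain_def by blast

lemma sobolev_chain_integrable: "sobolev_chain k u D \<Longrightarrow> j < k \<Longrightarrow> D (Suc j) integrable_on {-1..1}"
  unfolding sobolev_chain_def by blast

lemma sobolev_chain_integral:
  assumes "sobolev_chain k u D" and "j < k" and "x \<in> {-1..1}"
  shows "D j x = D j (-1) + integral {-1..x} (D (Suc j))"
  using assms unfolding sobolev_chain_def by blast

lemma sobolev_chain_top:
  assumes "sobolev_chain k u D"
  shows "D k integrable_on {-1..1}" and "(\<lambda>x. (D k x)\<^sup>2) integrable_on {-1..1}"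
  using assms unfolding sobolev_chain_def by blast+

lemma sobolev_chain_continuous_on:
  assumes u: "sobolev_chain k u D" and "j < k"
  shows "continuous_on {-1..1} (D j)"
proof -
  have "D (Suc j) integrable_on {-1..1}"
    using assms by (rule sobolev_chain_integrable)
  then have "continuous_on {-1..1} (\<lambda>x. D j (-1) + integral {-1..x} (D (Suc j)))"
    by (intro continuous_intros indefinite_integral_continuous_1)
  then show ?thesis
    by (rule continuous_on_eq) (metis sobolev_chain_integral[OF u \<open>j < k\<close>])
qed

lemma sobolev_chain_absolutely_integrable:
  assumes u: "sobolev_chain k u D" and "j \<le> k"
  shows "D j absolutely_integrable_on {-1..1}"
proof (cases "j < k")
  case True
  then show ?thesis
    by (intro absolutely_integrable_continuous_real sobolev_chain_continuous_on[OF u])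
next
  case False
  with \<open>j \<le> k\<close> have "j = k" by simp
  with sobolev_chain_top[OF u] show ?thesis
    by (blast intro: square_integrable_imp_absolutely_integrable)
qed

lemma abs_integral_mult_sobolev_chain_le:
  assumes "sobolev_chain k u D" and "continuous_on {-1..1} f"
  shows "\<bar>integral {-1..1} (\<lambda>x. f x * D k x)\<bar> \<le> l2norm f * l2norm (D k)"
  using assms(2) sobolev_chain_top[OF assms(1)] by (rule abs_integral_mult_le_l2norm)

lemma sobolev_chain_diff_poly:
  assumes u: "sobolev_chain k u D"
  shows "sobolev_chain k (\<lambda>x. u x - poly P x) (\<lambda>j x. D j x - poly ((pderiv ^^ j) P) x)"
  unfolding sobolev_chain_def
proof (intro conjI ballI allI impI)
  fix x :: real assume "x \<in> {-1..1}"
  with u show "D 0 x - poly ((pderiv ^^ 0) P) x = u x - poly P x"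
    by (simp add: sobolev_chain_base)
next
  fix j assume "j < k"
  with u have Dj: "D (Suc j) integrable_on {-1..1}"
    by (rule sobolev_chain_integrable)
  then show "(\<lambda>x. D (Suc j) x - poly ((pderiv ^^ Suc j) P) x) integrable_on {-1..1}"
    by (rule integrable_diff[OF _ integrable_on_poly])
  fix x :: real assume x: "x \<in> {-1..1}"
  have "integral {-1..x} (\<lambda>x. D (Suc j) x - poly ((pderiv ^^ Suc j) P) x)
      = integral {-1..x} (D (Suc j)) - (poly ((pderiv ^^ j) P) x - poly ((pderiv ^^ j) P) (-1))"
    using x by (simp add: integral_diff integrable_on_poly integral_poly_pderiv
        integrable_subinterval_real[OF Dj])
  then show "D j x - poly ((pderiv ^^ j) P) x = D j (-1) - poly ((pderiv ^^ j) P) (-1)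
      + integral {-1..x} (\<lambda>x. D (Suc j) x - poly ((pderiv ^^ Suc j) P) x)"
    using sobolev_chain_integral[OF u \<open>j < k\<close> x] by simp
next
  let ?p = "\<lambda>x. poly ((pderiv ^^ k) P) x"
  have Dk: "D k absolutely_integrable_on {-1..1}"
    by (rule sobolev_chain_absolutely_integrable[OF u order_refl])
  then have "D k integrable_on {-1..1}"
    by (rule set_lebesgue_integral_eq_integral(1))
  then show "(\<lambda>x. D k x - ?p x) integrable_on {-1..1}"
    by (rule integrable_diff[OF _ integrable_on_poly])
  have mixed: "(\<lambda>x. ?p x * D k x) integrable_on {-1..1}"
    by (intro integrable_on_continuous_mult Dk continuous_intros)
  have p2: "(\<lambda>x. (?p x)\<^sup>2) integrable_on {-1..1}"
    by (intro integrable_continuous_real continuous_intros)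
  note D2 = sobolev_chain_top(2)[OF u]
  have "(\<lambda>x. (D k x)\<^sup>2 - 2 * (?p x * D k x) + (?p x)\<^sup>2) integrable_on {-1..1}"
    by (intro integrable_add integrable_diff integrable_on_mult_right D2 mixed p2)
  then show "(\<lambda>x. (D k x - ?p x)\<^sup>2) integrable_on {-1..1}"
    by (rule integrable_eq) (simp add: power2_eq_square algebra_simps)
qed

lemma sobolev_chain_by_parts_iterated:
  fixes r :: "real poly"
  assumes chain: "sobolev_chain (Suc n) v E"
    and bc: "\<And>i. i \<in> {1..n} \<Longrightarrow> poly ((pderiv ^^ i) r) 1 = 0 \<and> poly ((pderiv ^^ i) r) (-1) = 0"
  shows "integral {-1..1} (\<lambda>x. poly r x * E (Suc n) x)
       = poly r 1 * E n 1 - poly r (-1) * E n (-1)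
         + (-1) ^ Suc n * integral {-1..1} (\<lambda>x. poly ((pderiv ^^ Suc n) r) x * v x)"
proof -
  define S where "S k = integral {-1..1} (\<lambda>x. poly ((pderiv ^^ k) r) x * E (Suc n - k) x)" for k
  have step: "S k = poly ((pderiv ^^ k) r) 1 * E (n - k) 1 - poly ((pderiv ^^ k) r) (-1) * E (n - k) (-1)
      - S (Suc k)" if "k \<le> n" for k
  proof -
    have idx: "Suc n - k = Suc (n - k)" "Suc n - Suc k = n - k" using that by auto
    have "S k = integral {-1..1} (\<lambda>x. poly ((pderiv ^^ k) r) x * E (Suc (n - k)) x)"
      unfolding S_def idx ..
    also have "\<dots> = poly ((pderiv ^^ k) r) 1 * E (n - k) 1 - poly ((pderiv ^^ k) r) (-1) * E (n - k) (-1)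
        - integral {-1..1} (\<lambda>x. poly (pderiv ((pderiv ^^ k) r)) x * E (n - k) x)"
    proof (rule integral_poly_mult_by_parts)
      show "E (Suc (n - k)) absolutely_integrable_on {-1..1}"
        using that by (intro sobolev_chain_absolutely_integrable[OF chain]) simp
      show "E (n - k) x = E (n - k) (-1) + integral {-1..x} (E (Suc (n - k)))" if "x \<in> {-1..1}" for x
        using \<open>k \<le> n\<close> that by (intro sobolev_chain_integral[OF chain]) simp_all
    qed simp
    also have "integral {-1..1} (\<lambda>x. poly (pderiv ((pderiv ^^ k) r)) x * E (n - k) x) = S (Suc k)"
      unfolding S_def idx by simp
    finally show ?thesis .
  qed
  have alternate: "S (Suc n - m) = (-1) ^ m * S (Suc n)" if "m \<le> n" for m
    using that
  proof (induction m)
    case (Suc m)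
    define k where "k = n - m"
    have k: "k \<le> n" "k \<in> {1..n}" "Suc n - Suc m = k" "Suc k = Suc n - m"
      using Suc.prems by (auto simp: k_def)
    have "S k = - S (Suc k)"
      using step[OF k(1)] bc[OF k(2)] by simp
    with Suc k show ?case by simp
  qed simp
  have "S (Suc n) = integral {-1..1} (\<lambda>x. poly ((pderiv ^^ Suc n) r) x * v x)"
    unfolding S_def by (intro integral_cong) (simp add: sobolev_chain_base[OF chain])
  moreover have "S 0 = poly r 1 * E n 1 - poly r (-1) * E n (-1) - S 1"
    using step[of 0] by simp
  moreover have "S 1 = (-1) ^ n * S (Suc n)"
    using alternate[of n] by simp
  ultimately show ?thesis unfolding S_def by simp
qed

section \<open>The projection error at the endpoints\<close>

lemma is_L2_proj_boundary_error_identity: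
  fixes r :: "real poly"
  assumes P: "is_L2_proj p u P" and u: "sobolev_chain (Suc \<nu>) u D"
    and deg: "degree r \<le> p + \<nu> + 1"
    and orth: "\<And>Q. degree Q < p - \<nu> \<Longrightarrow> poly_integral (r * Q) = 0"
    and bc: "\<And>i. i \<in> {1..\<nu>} \<Longrightarrow> poly ((pderiv ^^ i) r) 1 = 0 \<and> poly ((pderiv ^^ i) r) (-1) = 0"
  shows "integral {-1..1} (\<lambda>x. poly r x * D (Suc \<nu>) x)
    = poly r 1 * (D \<nu> 1 - poly ((pderiv ^^ \<nu>) P) 1)
      - poly r (-1) * (D \<nu> (-1) - poly ((pderiv ^^ \<nu>) P) (-1))"
proof -
  define E where "E = (\<lambda>j x. D j x - poly ((pderiv ^^ j) P) x)"
  have E: "sobolev_chain (Suc \<nu>) (\<lambda>x. u x - poly P x) E"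
    unfolding E_def by (rule sobolev_chain_diff_poly[OF u])
  have "degree ((pderiv ^^ Suc \<nu>) r) \<le> p"
    unfolding degree_higher_pderiv using deg by linarith
  then have "integral {-1..1} (\<lambda>x. (u x - poly P x) * poly ((pderiv ^^ Suc \<nu>) r) x) = 0"
    using P unfolding is_L2_proj_def by blast
  then have by_parts: "integral {-1..1} (\<lambda>x. poly r x * E (Suc \<nu>) x)
      = poly r 1 * E \<nu> 1 - poly r (-1) * E \<nu> (-1)"
    using sobolev_chain_by_parts_iterated[OF E bc] by (simp add: mult.commute)
  have "poly_integral (r * (pderiv ^^ Suc \<nu>) P) = 0"
  proof (cases "degree P < Suc \<nu>")
    case True
    then have "(pderiv ^^ Suc \<nu>) P = 0" by (rule higher_pderiv_eq_0)
    then show ?thesis by (simp add: poly_integral_def)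
  next
    case False
    moreover have "degree P \<le> p" using P unfolding is_L2_proj_def by blast
    ultimately have "degree ((pderiv ^^ Suc \<nu>) P) < p - \<nu>"
      unfolding degree_higher_pderiv by linarith
    then show ?thesis by (rule orth)
  qed
  moreover have "integral {-1..1} (\<lambda>x. poly r x * E (Suc \<nu>) x)
      = integral {-1..1} (\<lambda>x. poly r x * D (Suc \<nu>) x) - poly_integral (r * (pderiv ^^ Suc \<nu>) P)"
  proof -
    have "(\<lambda>x. poly r x * D (Suc \<nu>) x) integrable_on {-1..1}"
      by (intro integrable_on_continuous_mult continuous_intros
          sobolev_chain_absolutely_integrable[OF u order_refl])
    then show ?thesis
      unfolding E_def poly_integral_mult
      using integrable_on_poly[of "r * (pderiv ^^ Suc \<nu>) P"]
      by (simp add: right_diff_distrib integral_diff)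
  qed
  ultimately show ?thesis using by_parts unfolding E_def by simp
qed

lemma is_L2_proj_error_bound_right:
  fixes r :: "real poly"
  assumes P: "is_L2_proj p u P" and u: "sobolev_chain (Suc \<nu>) u D"
    and deg: "degree r \<le> p + \<nu> + 1"
    and orth: "\<And>Q. degree Q < p - \<nu> \<Longrightarrow> poly_integral (r * Q) = 0"
    and bc: "\<And>i. i \<in> {1..\<nu>} \<Longrightarrow> poly ((pderiv ^^ i) r) 1 = 0 \<and> poly ((pderiv ^^ i) r) (-1) = 0"
    and "poly r 1 = 1" and "poly r (-1) = 0"
  shows "\<bar>D \<nu> 1 - poly ((pderiv ^^ \<nu>) P) 1\<bar> \<le> l2norm (poly r) * l2norm (D (Suc \<nu>))"
proof -
  have "D \<nu> 1 - poly ((pderiv ^^ \<nu>) P) 1 = integral {-1..1} (\<lambda>x. poly r x * D (Suc \<nu>) x)"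
    using is_L2_proj_boundary_error_identity[OF P u deg orth bc] assms(6,7) by simp
  also have "\<bar>\<dots>\<bar> \<le> l2norm (poly r) * l2norm (D (Suc \<nu>))"
    by (intro abs_integral_mult_sobolev_chain_le[OF u] continuous_intros)
  finally show ?thesis .
qed

lemma is_L2_proj_error_bound_left:
  fixes r :: "real poly"
  assumes P: "is_L2_proj p u P" and u: "sobolev_chain (Suc \<nu>) u D"
    and deg: "degree r \<le> p + \<nu> + 1"
    and orth: "\<And>Q. degree Q < p - \<nu> \<Longrightarrow> poly_integral (r * Q) = 0"
    and bc: "\<And>i. i \<in> {1..\<nu>} \<Longrightarrow> poly ((pderiv ^^ i) r) 1 = 0 \<and> poly ((pderiv ^^ i) r) (-1) = 0"
    and "poly r 1 = 1" and "poly r (-1) = 0"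
  shows "\<bar>D \<nu> (-1) - poly ((pderiv ^^ \<nu>) P) (-1)\<bar> \<le> l2norm (poly r) * l2norm (D (Suc \<nu>))"
proof -
  define r' where "r' = pcompose r [:0, -1:]"
  have poly_r': "poly r' x = poly r (- x)" for x
    by (simp add: r'_def poly_pcompose)
  have deg': "degree r' \<le> p + \<nu> + 1"
    using deg by (simp add: r'_def degree_pcompose)
  have orth': "poly_integral (r' * Q) = 0" if "degree Q < p - \<nu>" for Q
  proof -
    have "poly_integral (r' * Q) = integral {-1..1} (\<lambda>x. poly r (- x) * poly Q x)"
      by (simp add: poly_integral_mult poly_r')
    also have "\<dots> = integral {-1..1} (\<lambda>x. poly r x * poly Q (- x))"
      using integral_reflect_sym_real[of 1 "\<lambda>x. poly r x * poly Q (- x)"] by simp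
    also have "\<dots> = poly_integral (r * pcompose Q [:0, -1:])"
      by (simp add: poly_integral_mult poly_pcompose)
    also have "\<dots> = 0"
      by (rule orth) (use that in \<open>simp add: degree_pcompose\<close>)
    finally show ?thesis .
  qed
  have bc': "poly ((pderiv ^^ i) r') 1 = 0 \<and> poly ((pderiv ^^ i) r') (-1) = 0" if "i \<in> {1..\<nu>}" for i
    using bc[OF that] by (simp add: r'_def higher_pderiv_reflect poly_pcompose)
  have "- (D \<nu> (-1) - poly ((pderiv ^^ \<nu>) P) (-1)) = integral {-1..1} (\<lambda>x. poly r' x * D (Suc \<nu>) x)"
    using is_L2_proj_boundary_error_identity[OF P u deg' orth' bc'] assms(6,7) by (simp add: poly_r')
  also have "\<bar>\<dots>\<bar> \<le> l2norm (poly r') * l2norm (D (Suc \<nu>))"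
    by (intro abs_integral_mult_sobolev_chain_le[OF u] continuous_intros)
  also have "l2norm (poly r') = l2norm (poly r)"
    unfolding l2norm_def poly_r' using integral_reflect_sym_real[of 1 "\<lambda>x. (poly r x)\<^sup>2"] by simp
  finally show ?thesis by simp
qed

theorem lemma5:
  fixes p \<nu> :: nat and u :: "real \<Rightarrow> real" and D :: "nat \<Rightarrow> real \<Rightarrow> real"
    and q :: "real poly"
  assumes "\<nu> \<le> p"
    and "sobolev_chain (\<nu> + 1) u D"
    and "q \<in> Lambda (p - \<nu>) (p + \<nu> + 1)"
    and "poly q 1 = 1" and "poly q (-1) = 0"
    and "\<forall>i\<in>{1..\<nu>}. poly ((pderiv ^^ i) q) 1 = 0 \<and> poly ((pderiv ^^ i) q) (-1) = 0"
  shows "\<forall>s\<in>{-1, 1::real}.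
           \<bar>D \<nu> s - poly ((pderiv ^^ \<nu>) (proj_L2 p u)) s\<bar> \<le> l2norm (poly q) * l2norm (D (\<nu> + 1))"
proof -
  have u: "sobolev_chain (Suc \<nu>) u D" using assms(2) by simp
  have "(\<lambda>x. u x * poly Q x) integrable_on {-1..1}" for Q
  proof -
    have "(\<lambda>x. D 0 x * poly Q x) integrable_on {-1..1}"
      by (intro integrable_continuous_real continuous_intros sobolev_chain_continuous_on[OF u]) simp
    then show ?thesis
      by (rule integrable_eq) (simp add: sobolev_chain_base[OF u])
  qed
  then have P: "is_L2_proj p u (proj_L2 p u)" by (rule is_L2_proj_proj_L2)
  note q = Lambda_degree_le[OF assms(3)] Lambda_orthogonal_low_degree[OF assms(3)]
  show ?thesis
    using is_L2_proj_error_bound_right[OF P u q _ assms(4,5)]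
      is_L2_proj_error_bound_left[OF P u q _ assms(4,5)] assms(6) by auto
qed

end
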